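(* Let $D=(N,A)$, $\mathcal{K}$, $\{D^k\}_{k\in\mathcal{K}}$ be an instance of SND-RR with time horizon $T$, let $\mathcal{A}$ be a valid arc partition and $G=G(D,\mathcal{A})$ the auxiliary flat network. Then the integer programs SND-RR$(D_T)$ and SND-RR$(G_T)$ have the same number of variables and the same number of constraints, and they are equivalent: there is a bijection between their feasible solutions preserving the objective value.
   Context: An instance of SND-RR consists of: a directed graph $D=(N,A)$; for each arc $vw\in A$ a transit time $\tau_{vw}\in\mathbb{Z}_{>0}$, fixed cost $f_{vw}>0$, capacity $u_{vw}\in\mathbb{Z}_{>0}$, and per-unit cost $c^k_{vw}>0$ for each commodity $k$; a set $\mathcal{K}$ of commodities, each with origin $o_k$, destination $d_k$, demand $q_k$, release time $r_k$, deadline $l_k$ (integers, earliest release $0$); and subgraphs $D^k=(N^k,A^k)\subseteq D$. Standing assumption: $\delta^+_{D^k}(d_k)=\emptyset$ and $\delta^+_{D^k}(v)\ne\emptyset$ for $v\in N^k\setminus\{d_k\}$. $T=\max_kl_k$, $[T]=\{0,\dots,T\}$. For any flat graph $H$ with transit times, its time-expanded network $H_T$ has timed nodes $(v,t)$, $t\in[T]$, movement arcs $((v,t),(w,t+\tau_{vw}))$ for arcs $vw$ of $H$ with $t+\tau_{vw}\le T$, and holdover arcs $((v,t),(v,t+1))$. $D_T=(N_T,A_T\cup H_T)$, $D^k_T=(N^k_T,A^k_T\cup H^k_T)$. For a timed arc $a=((v,t),(w,t'))$, $u_a=u_{vw}$, $f_a=f_{vw}$, $c^k_a=c^k_{vw}$;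 $x^k(S)=\sum_{a\in S}x^k_a$; $\delta^\pm$ denote outgoing/incoming timed arcs. SND-RR$(D_T)$: minimize $\sum_{a\in A_T}f_ay_a+\sum_{a\in A_T}\sum_kc^k_aq_kx^k_a$ s.t. for all $k$, $(v,t)\in N^k_T$: $x^k(\delta^+_{D^k_T}(v,t))-x^k(\delta^-_{D^k_T}(v,t))$ is $1$ at $(o_k,r_k)$, $-1$ at $(d_k,l_k)$, $0$ otherwise; $\sum_kq_kx^k_a\le u_ay_a$ for $a\in A_T$; $x^k_a\in\{0,1\}$ for $a\in A^k_T\cup H^k_T$; $y_a\in\mathbb{Z}_{\ge0}$ for $a\in A_T$. Valid partition: $\mathcal{A}=\{\mathcal{A}_v\}_{v\in N}$ with each $\mathcal{A}_v$ a partition of $\delta^+_D(v)$ such that for each $k$, $\delta^+_{D^k}(v)\subseteq A_i$ for some $A_i\in\mathcal{A}_v$. Auxiliary network $G=(V,E)$: $\mathcal{V}(v)=\{v^0,\dots,v^{|\mathcal{A}_v|}\}$ (copy $v^i$ per part $A_i$, terminal copy $v^0$), $V=\bigcup_v\mathcal{V}(v)$, $E=\{v^iw^j: vw\in A_i\in\mathcal{A}_v, w^j\in\mathcal{V}(w)\}$; each $v^iw^j$ gets the transit time and costs of $vw$. With $\mathcal{K}(A_i)=\{k:\emptyset\ne\delta^+_{D^k}(v)\subseteq A_i\}$ for $A_i\in\mathcal{A}_v$: $G^k=(V^k,E^k)$, $V^k=\{v^i:v\in N^k,A_i\in\mathcal{A}_v,k\in\mathcal{K}(A_i)\}\cup\{d^0_k\}$,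 $E^k=\{v^iw^j:vw\in A^k,v^i,w^j\in V^k\}$; $o'_k$ denotes the unique copy of $o_k$ in $V^k$. $G_T=(V_T,E_T\cup F_T)$ and $G^k_T=(V^k_T,E^k_T\cup F^k_T)$ are the time-expanded networks. For $a=((v,t),(w,t'))\in A_T$, $\mathcal{E}_T(a)=\{((v^i,t),(w^j,t')): vw\in A_i\in\mathcal{A}_v, w^j\in\mathcal{V}(w)\}$. SND-RR$(G_T)$: minimize $\sum_{a\in A_T}f_ay_a+\sum_k\sum_{e\in E_T}c^k_eq_kx^k_e$ s.t. for all $k$, $(v,t)\in V^k_T$: $x^k(\delta^+_{G^k_T}(v,t))-x^k(\delta^-_{G^k_T}(v,t))$ is $1$ at $(o'_k,r_k)$, $-1$ at $(d^0_k,l_k)$, $0$ otherwise; $\sum_k\sum_{e\in\mathcal{E}_T(a)}q_kx^k_e\le u_ay_a$ for all $a\in A_T$; $x^k_e\in\{0,1\}$ for $e\in E^k_T\cup F^k_T$; $y_a\in\mathbb{Z}_{\ge0}$ for $a\in A_T$. *)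

theory Defs
  imports Complex_Main
begin

text \<open>A timed arc is either a movement arc Inl (e, t) (flat arc e = (v,w) leaving v at
  time t, arriving at w at time t + tau e) or a holdover arc Inr (v, t) from (v,t) to (v,t+1).\<close>

type_synonym 'v tarc = "(('v \<times> 'v) \<times> nat) + ('v \<times> nat)"

definition tnodes :: "'v set \<Rightarrow> nat \<Rightarrow> ('v \<times> nat) set" where
  "tnodes V T = V \<times> {0..T}"

definition mv_arcs :: "('v \<times> 'v) set \<Rightarrow> ('v \<times> 'v \<Rightarrow> nat) \<Rightarrow> nat \<Rightarrow> 'v tarc set" where
  "mv_arcs E tau T = Inl ` {(e, t). e \<in> E \<and> t + tau e \<le> T}"

definition hold_arcs :: "'v set \<Rightarrow> nat \<Rightarrow> 'v tarc set" where
  "hold_arcs V T = Inr ` {(v, t). v \<in> V \<and> t + 1 \<le> T}"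

definition tarcs :: "'v set \<Rightarrow> ('v \<times> 'v) set \<Rightarrow> ('v \<times> 'v \<Rightarrow> nat) \<Rightarrow> nat \<Rightarrow> 'v tarc set" where
  "tarcs V E tau T = mv_arcs E tau T \<union> hold_arcs V T"

fun ttail :: "'v tarc \<Rightarrow> 'v \<times> nat" where
  "ttail (Inl ((v, w), t)) = (v, t)"
| "ttail (Inr (v, t)) = (v, t)"

fun thead :: "('v \<times> 'v \<Rightarrow> nat) \<Rightarrow> 'v tarc \<Rightarrow> 'v \<times> nat" where
  "thead tau (Inl ((v, w), t)) = (w, t + tau (v, w))"
| "thead tau (Inr (v, t)) = (v, t + 1)"

fun flat_arc :: "'v tarc \<Rightarrow> 'v \<times> 'v" where
  "flat_arc (Inl (e, t)) = e"
| "flat_arc (Inr (v, t)) = (v, v)"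

definition flow_cons ::
  "'v set \<Rightarrow> ('v \<times> 'v) set \<Rightarrow> ('v \<times> 'v \<Rightarrow> nat) \<Rightarrow> nat \<Rightarrow> 'v \<times> nat \<Rightarrow> 'v \<times> nat
     \<Rightarrow> ('v tarc \<Rightarrow> int) \<Rightarrow> bool" where
  "flow_cons V E tau T src snk x \<longleftrightarrow>
     (\<forall>p \<in> tnodes V T.
        (\<Sum>a \<in> {a \<in> tarcs V E tau T. ttail a = p}. x a)
      - (\<Sum>a \<in> {a \<in> tarcs V E tau T. thead tau a = p}. x a)
      = (if p = src then 1 else if p = snk then -1 else 0))"

record ('n, 'k) sndrr =
  nodes :: "'n set"
  arcs :: "('n \<times> 'n) set"
  tau :: "'n \<times> 'n \<Rightarrow> nat"
  fcost :: "'n \<times> 'n \<Rightarrow> real"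
  cap :: "'n \<times> 'n \<Rightarrow> nat"
  ucost :: "'k \<Rightarrow> 'n \<times> 'n \<Rightarrow> real"
  comms :: "'k set"
  orig :: "'k \<Rightarrow> 'n"
  dest :: "'k \<Rightarrow> 'n"
  dem :: "'k \<Rightarrow> real"
  rel :: "'k \<Rightarrow> nat"
  dl :: "'k \<Rightarrow> nat"
  Nk :: "'k \<Rightarrow> 'n set"
  Ak :: "'k \<Rightarrow> ('n \<times> 'n) set"

definition out_arcs :: "('v \<times> 'v) set \<Rightarrow> 'v \<Rightarrow> ('v \<times> 'v) set" where
  "out_arcs E v = {a \<in> E. fst a = v}"

definition valid_instance :: "('n, 'k) sndrr \<Rightarrow> bool" where
  "valid_instance I \<longleftrightarrow>
     finite (nodes I) \<and> finite (arcs I) \<and> arcs I \<subseteq> nodes I \<times> nodes I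
   \<and> finite (comms I) \<and> comms I \<noteq> {}
   \<and> (\<forall>a \<in> arcs I. tau I a > 0 \<and> fcost I a > 0 \<and> cap I a > 0
        \<and> (\<forall>k \<in> comms I. ucost I k a > 0))
   \<and> (\<exists>k \<in> comms I. rel I k = 0)
   \<and> (\<forall>k \<in> comms I.
        dem I k > 0
      \<and> Nk I k \<subseteq> nodes I \<and> Ak I k \<subseteq> arcs I \<and> Ak I k \<subseteq> Nk I k \<times> Nk I k
      \<and> orig I k \<in> Nk I k \<and> dest I k \<in> Nk I k
      \<and> out_arcs (Ak I k) (dest I k) = {}
      \<and> (\<forall>v \<in> Nk I k - {dest I k}. out_arcs (Ak I k) v \<noteq> {}))"

definition horizon :: "('n, 'k) sndrr \<Rightarrow> nat" where
  "horizon I = Max (dl I ` comms I)"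

text \<open>A candidate solution is a pair (x, y); x k a is the variable x^k_a, y a the variable y_a.
  Entries outside the variable index sets are required to be 0 (so that solutions are
  exactly the assignments to the IP's variables).\<close>

definition AT :: "('n, 'k) sndrr \<Rightarrow> 'n tarc set" where
  "AT I = mv_arcs (arcs I) (tau I) (horizon I)"

definition DkT :: "('n, 'k) sndrr \<Rightarrow> 'k \<Rightarrow> 'n tarc set" where
  "DkT I k = tarcs (Nk I k) (Ak I k) (tau I) (horizon I)"

definition feasD :: "('n, 'k) sndrr \<Rightarrow> (('k \<Rightarrow> 'n tarc \<Rightarrow> int) \<times> ('n tarc \<Rightarrow> int)) set" where
  "feasD I = {(x, y).
     (\<forall>k a. (k \<notin> comms I \<or> a \<notin> DkT I k) \<longrightarrow> x k a = 0)
   \<and> (\<forall>a. a \<notin> AT I \<longrightarrow> y a = 0)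
   \<and> (\<forall>k \<in> comms I. flow_cons (Nk I k) (Ak I k) (tau I) (horizon I)
                       (orig I k, rel I k) (dest I k, dl I k) (x k))
   \<and> (\<forall>a \<in> AT I. (\<Sum>k \<in> comms I. dem I k * of_int (x k a))
                     \<le> of_nat (cap I (flat_arc a)) * of_int (y a))
   \<and> (\<forall>k \<in> comms I. \<forall>a \<in> DkT I k. x k a \<in> {0, 1})
   \<and> (\<forall>a \<in> AT I. y a \<ge> 0)}"

definition objD :: "('n, 'k) sndrr \<Rightarrow> ('k \<Rightarrow> 'n tarc \<Rightarrow> int) \<times> ('n tarc \<Rightarrow> int) \<Rightarrow> real" where
  "objD I s = (case s of (x, y) \<Rightarrow>
     (\<Sum>a \<in> AT I. fcost I (flat_arc a) * of_int (y a))
   + (\<Sum>a \<in> AT I. \<Sum>k \<in> comms I. ucost I k (flat_arc a) * dem I k * of_int (x k a)))"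

definition nvarsD :: "('n, 'k) sndrr \<Rightarrow> nat" where
  "nvarsD I = card (Sigma (comms I) (DkT I)) + card (AT I)"

definition nconsD :: "('n, 'k) sndrr \<Rightarrow> nat" where
  "nconsD I = card (Sigma (comms I) (\<lambda>k. tnodes (Nk I k) (horizon I))) + card (AT I)"

text \<open>Node copies: (v, None) is the terminal copy v^0, (v, Some B) the copy v^i for part B = A_i.\<close>

type_synonym 'n copy = "'n \<times> ('n \<times> 'n) set option"

definition valid_partition :: "('n, 'k) sndrr \<Rightarrow> ('n \<Rightarrow> ('n \<times> 'n) set set) \<Rightarrow> bool" where
  "valid_partition I P \<longleftrightarrow>
     (\<forall>v \<in> nodes I.
        (\<forall>B \<in> P v. B \<noteq> {})
      \<and> (\<forall>B \<in> P v. \<forall>B' \<in> P v. B \<noteq> B' \<longrightarrow> B \<inter> B' = {})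
      \<and> \<Union>(P v) = out_arcs (arcs I) v
      \<and> (\<forall>k \<in> comms I. out_arcs (Ak I k) v \<noteq> {} \<longrightarrow>
            (\<exists>B \<in> P v. out_arcs (Ak I k) v \<subseteq> B)))"

definition GV :: "('n, 'k) sndrr \<Rightarrow> ('n \<Rightarrow> ('n \<times> 'n) set set) \<Rightarrow> 'n copy set" where
  "GV I P = {(v, None) | v. v \<in> nodes I} \<union> {(v, Some B) | v B. v \<in> nodes I \<and> B \<in> P v}"

definition GE :: "('n, 'k) sndrr \<Rightarrow> ('n \<Rightarrow> ('n \<times> 'n) set set) \<Rightarrow> ('n copy \<times> 'n copy) set" where
  "GE I P = {((v, Some B), (w, j)) | v w B j.
               v \<in> nodes I \<and> B \<in> P v \<and> (v, w) \<in> B \<and> (w, j) \<in> GV I P}"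

definition proj :: "'n copy \<times> 'n copy \<Rightarrow> 'n \<times> 'n" where
  "proj e = (fst (fst e), fst (snd e))"

definition tauG :: "('n, 'k) sndrr \<Rightarrow> 'n copy \<times> 'n copy \<Rightarrow> nat" where
  "tauG I e = tau I (proj e)"

definition Kpart :: "('n, 'k) sndrr \<Rightarrow> 'n \<Rightarrow> ('n \<times> 'n) set \<Rightarrow> 'k set" where
  "Kpart I v B = {k \<in> comms I. out_arcs (Ak I k) v \<noteq> {} \<and> out_arcs (Ak I k) v \<subseteq> B}"

definition GVk :: "('n, 'k) sndrr \<Rightarrow> ('n \<Rightarrow> ('n \<times> 'n) set set) \<Rightarrow> 'k \<Rightarrow> 'n copy set" where
  "GVk I P k = {(v, Some B) | v B. v \<in> Nk I k \<and> B \<in> P v \<and> k \<in> Kpart I v B}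
               \<union> {(dest I k, None)}"

definition GEk :: "('n, 'k) sndrr \<Rightarrow> ('n \<Rightarrow> ('n \<times> 'n) set set) \<Rightarrow> 'k \<Rightarrow> ('n copy \<times> 'n copy) set" where
  "GEk I P k = {((v, i), (w, j)) | v i w j.
                 (v, w) \<in> Ak I k \<and> (v, i) \<in> GVk I P k \<and> (w, j) \<in> GVk I P k}"

definition origG :: "('n, 'k) sndrr \<Rightarrow> ('n \<Rightarrow> ('n \<times> 'n) set set) \<Rightarrow> 'k \<Rightarrow> 'n copy" where
  "origG I P k = (THE c. c \<in> GVk I P k \<and> fst c = orig I k)"

definition ET :: "('n, 'k) sndrr \<Rightarrow> ('n \<Rightarrow> ('n \<times> 'n) set set) \<Rightarrow> 'n copy tarc set" where
  "ET I P = mv_arcs (GE I P) (tauG I) (horizon I)"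

definition ETof :: "('n, 'k) sndrr \<Rightarrow> ('n \<Rightarrow> ('n \<times> 'n) set set) \<Rightarrow> 'n tarc \<Rightarrow> 'n copy tarc set" where
  "ETof I P a = (case a of
      Inl ((v, w), t) \<Rightarrow>
        {Inl (((v, Some B), (w, j)), t) | B j. B \<in> P v \<and> (v, w) \<in> B \<and> (w, j) \<in> GV I P}
    | Inr _ \<Rightarrow> {})"

definition GkT :: "('n, 'k) sndrr \<Rightarrow> ('n \<Rightarrow> ('n \<times> 'n) set set) \<Rightarrow> 'k \<Rightarrow> 'n copy tarc set" where
  "GkT I P k = tarcs (GVk I P k) (GEk I P k) (tauG I) (horizon I)"

definition feasG :: "('n, 'k) sndrr \<Rightarrow> ('n \<Rightarrow> ('n \<times> 'n) set set)
     \<Rightarrow> (('k \<Rightarrow> 'n copy tarc \<Rightarrow> int) \<times> ('n tarc \<Rightarrow> int)) set" where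
  "feasG I P = {(x, y).
     (\<forall>k e. (k \<notin> comms I \<or> e \<notin> GkT I P k) \<longrightarrow> x k e = 0)
   \<and> (\<forall>a. a \<notin> AT I \<longrightarrow> y a = 0)
   \<and> (\<forall>k \<in> comms I. flow_cons (GVk I P k) (GEk I P k) (tauG I) (horizon I)
                       (origG I P k, rel I k) ((dest I k, None), dl I k) (x k))
   \<and> (\<forall>a \<in> AT I. (\<Sum>k \<in> comms I. \<Sum>e \<in> ETof I P a. dem I k * of_int (x k e))
                     \<le> of_nat (cap I (flat_arc a)) * of_int (y a))
   \<and> (\<forall>k \<in> comms I. \<forall>e \<in> GkT I P k. x k e \<in> {0, 1})
   \<and> (\<forall>a \<in> AT I. y a \<ge> 0)}"

definition objG :: "('n, 'k) sndrr \<Rightarrow> ('n \<Rightarrow> ('n \<times> 'n) set set)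
     \<Rightarrow> ('k \<Rightarrow> 'n copy tarc \<Rightarrow> int) \<times> ('n tarc \<Rightarrow> int) \<Rightarrow> real" where
  "objG I P s = (case s of (x, y) \<Rightarrow>
     (\<Sum>a \<in> AT I. fcost I (flat_arc a) * of_int (y a))
   + (\<Sum>k \<in> comms I. \<Sum>e \<in> ET I P. ucost I k (proj (flat_arc e)) * dem I k * of_int (x k e)))"

definition nvarsG :: "('n, 'k) sndrr \<Rightarrow> ('n \<Rightarrow> ('n \<times> 'n) set set) \<Rightarrow> nat" where
  "nvarsG I P = card (Sigma (comms I) (GkT I P)) + card (AT I)"

definition nconsG :: "('n, 'k) sndrr \<Rightarrow> ('n \<Rightarrow> ('n \<times> 'n) set set) \<Rightarrow> nat" where
  "nconsG I P = card (Sigma (comms I) (\<lambda>k. tnodes (GVk I P k) (horizon I))) + card (AT I)"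

end

theory Submission
  imports Defs
begin

(* For a commodity k, every node v of D^k has exactly one copy in G^k: the terminal copy if
   v = d_k, and otherwise the copy of the unique part of the partition at v that contains all
   arcs of k leaving v (parts are disjoint and that arc set is nonempty). So forgetting the copy
   index is an isomorphism G^k -> D^k, which induces an isomorphism G^k_T -> D^k_T of the
   time-expanded networks respecting tails, heads, origin and destination. Pulling the x-variables
   back along it, and keeping y, matches flow conservation and integrality constraints one to one.
   The arcs E_T(a) are exactly the timed arcs of G_T lying over a, and at most one of them lies in
   G^k_T, so capacity rows and objective values agree as well. *)

fun map_tarc :: "('a \<Rightarrow> 'b) \<Rightarrow> 'a tarc \<Rightarrow> 'b tarc" where
  "map_tarc f (Inl ((v, w), t)) = Inl ((f v, f w), t)"
| "map_tarc f (Inr (v, t)) = Inr (f v, t)"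

lemma ttail_map_tarc: "ttail (map_tarc f a) = apfst f (ttail a)"
  by (cases a rule: ttail.cases) auto

lemma thead_map_tarc:
  assumes "\<tau>' = \<tau> \<circ> map_prod f f"
  shows "thead \<tau> (map_tarc f a) = apfst f (thead \<tau>' a)"
  using assms by (cases a rule: ttail.cases) auto

lemma flat_arc_map_tarc: "flat_arc (map_tarc f a) = map_prod f f (flat_arc a)"
  by (cases a rule: ttail.cases) auto

lemma Inl_in_tarcs_iff [simp]: "Inl (e, t) \<in> tarcs V E \<tau> T \<longleftrightarrow> e \<in> E \<and> t + \<tau> e \<le> T"
  by (auto simp: tarcs_def mv_arcs_def hold_arcs_def)

lemma Inr_in_tarcs_iff [simp]: "Inr (v, t) \<in> tarcs V E \<tau> T \<longleftrightarrow> v \<in> V \<and> t + 1 \<le> T"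
  by (auto simp: tarcs_def mv_arcs_def hold_arcs_def)

lemma finite_mv_arcs: "finite E \<Longrightarrow> finite (mv_arcs E \<tau> T)"
proof -
  assume "finite E"
  moreover have "mv_arcs E \<tau> T \<subseteq> Inl ` (E \<times> {0..T})"
    by (auto simp: mv_arcs_def)
  ultimately show ?thesis
    by (meson finite_SigmaI finite_atLeastAtMost finite_imageI finite_subset)
qed

lemma Inl_in_mv_arcs_iff [simp]: "Inl (e, t) \<in> mv_arcs E \<tau> T \<longleftrightarrow> e \<in> E \<and> t + \<tau> e \<le> T"
  by (auto simp: mv_arcs_def)

lemma Inr_notin_mv_arcs [simp]: "Inr p \<notin> mv_arcs E \<tau> T"
  by (auto simp: mv_arcs_def)

lemma tarcs_ends_in_nodes:
  assumes "E \<subseteq> V \<times> V" "a \<in> tarcs V E \<tau> T"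
  shows "fst (ttail a) \<in> V" "fst (thead \<tau> a) \<in> V"
  using assms by (cases a rule: ttail.cases; auto)+

lemma bij_betw_map_tarc:
  assumes inj: "inj_on f V'" and V: "f ` V' = V"
    and E': "E' \<subseteq> V' \<times> V'" and E: "map_prod f f ` E' = E"
    and \<tau>: "\<tau>' = \<tau> \<circ> map_prod f f"
  shows "bij_betw (map_tarc f) (tarcs V' E' \<tau>' T) (tarcs V E \<tau> T)"
proof -
  have inj_E': "inj_on (map_prod f f) E'"
    using map_prod_inj_on[OF inj inj] E' by (rule inj_on_subset)
  have "inj_on (map_tarc f) (tarcs V' E' \<tau>' T)"
  proof (rule inj_onI)
    fix a b
    assume "a \<in> tarcs V' E' \<tau>' T" "b \<in> tarcs V' E' \<tau>' T" "map_tarc f a = map_tarc f b"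
    then show "a = b"
      using inj_onD[OF inj_E'] inj_onD[OF inj]
      by (cases a rule: ttail.cases; cases b rule: ttail.cases) auto
  qed
  moreover have "map_tarc f ` tarcs V' E' \<tau>' T = tarcs V E \<tau> T"
  proof (intro equalityI subsetI)
    fix b
    assume "b \<in> map_tarc f ` tarcs V' E' \<tau>' T"
    then obtain a where "a \<in> tarcs V' E' \<tau>' T" "b = map_tarc f a" by blast
    then show "b \<in> tarcs V E \<tau> T"
      using V E \<tau> by (cases a rule: ttail.cases) auto
  next
    fix b
    assume b: "b \<in> tarcs V E \<tau> T"
    show "b \<in> map_tarc f ` tarcs V' E' \<tau>' T"
    proof (cases b rule: ttail.cases)
      case (1 v w t)
      with b E obtain e' where "e' \<in> E'" "map_prod f f e' = (v, w)" "t + \<tau> (v, w) \<le> T" by auto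
      with 1 \<tau> show ?thesis
        by (intro image_eqI[of _ _ "Inl (e', t)"]) (cases e'; auto)+
    next
      case (2 v t)
      with b V obtain v' where "v' \<in> V'" "f v' = v" "t + 1 \<le> T" by auto
      with 2 show ?thesis
        by (intro image_eqI[of _ _ "Inr (v', t)"]) auto
    qed
  qed
  ultimately show ?thesis
    by (simp add: bij_betw_def)
qed

lemma sum_fibre_bij_betw:
  assumes h: "bij_betw h A B" and g: "inj_on g C" and p: "p \<in> C"
    and ends: "\<And>a. a \<in> A \<Longrightarrow> \<pi>' a \<in> C \<and> \<pi> (h a) = g (\<pi>' a)"
  shows "(\<Sum>a \<in> {a \<in> A. \<pi>' a = p}. x (h a)) = (\<Sum>b \<in> {b \<in> B. \<pi> b = g p}. x b)"
proof (rule sum.reindex_bij_betw, rule bij_betw_Collect[OF h])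
  fix a
  assume "a \<in> A"
  then show "\<pi> (h a) = g p \<longleftrightarrow> \<pi>' a = p"
    using ends inj_on_eq_iff[OF g _ p] by auto
qed

lemma flow_cons_map_tarc:
  assumes inj: "inj_on f V'" and V: "f ` V' = V"
    and E': "E' \<subseteq> V' \<times> V'" and E: "map_prod f f ` E' = E"
    and \<tau>: "\<tau>' = \<tau> \<circ> map_prod f f"
    and src: "fst src \<in> V'" and snk: "fst snk \<in> V'"
    and x: "\<And>a. a \<in> tarcs V' E' \<tau>' T \<Longrightarrow> x' a = x (map_tarc f a)"
  shows "flow_cons V' E' \<tau>' T src snk x' \<longleftrightarrow> flow_cons V E \<tau> T (apfst f src) (apfst f snk) x"
proof -
  let ?A' = "tarcs V' E' \<tau>' T" and ?A = "tarcs V E \<tau> T"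
  have bij: "bij_betw (map_tarc f) ?A' ?A"
    using bij_betw_map_tarc[OF inj V E' E \<tau>] .
  have inj_apfst: "inj_on (apfst f) (V' \<times> UNIV)"
    using inj by (auto simp: inj_on_def apfst_def map_prod_def split: prod.splits)
  have ends: "ttail a \<in> V' \<times> UNIV" "thead \<tau>' a \<in> V' \<times> UNIV" if "a \<in> ?A'" for a
    using tarcs_ends_in_nodes[OF E' that] by (auto simp: mem_Times_iff)
  have balance: "(\<Sum>a \<in> {a \<in> ?A'. ttail a = p}. x' a) - (\<Sum>a \<in> {a \<in> ?A'. thead \<tau>' a = p}. x' a)
      = (\<Sum>a \<in> {a \<in> ?A. ttail a = apfst f p}. x a) - (\<Sum>a \<in> {a \<in> ?A. thead \<tau> a = apfst f p}. x a)"
    if p: "p \<in> V' \<times> UNIV" for p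
  proof -
    have "(\<Sum>a \<in> {a \<in> ?A'. ttail a = p}. x' a) = (\<Sum>a \<in> {a \<in> ?A'. ttail a = p}. x (map_tarc f a))"
      using x by (intro sum.cong) auto
    also have "\<dots> = (\<Sum>a \<in> {a \<in> ?A. ttail a = apfst f p}. x a)"
      using ends by (intro sum_fibre_bij_betw[OF bij inj_apfst p]) (auto simp: ttail_map_tarc)
    moreover have "(\<Sum>a \<in> {a \<in> ?A'. thead \<tau>' a = p}. x' a) = (\<Sum>a \<in> {a \<in> ?A'. thead \<tau>' a = p}. x (map_tarc f a))"
      using x by (intro sum.cong) auto
    moreover have "\<dots> = (\<Sum>a \<in> {a \<in> ?A. thead \<tau> a = apfst f p}. x a)"
      using ends by (intro sum_fibre_bij_betw[OF bij inj_apfst p]) (auto simp: thead_map_tarc[OF \<tau>])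
    ultimately show ?thesis
      by simp
  qed
  have demand: "(p = q) \<longleftrightarrow> (apfst f p = apfst f q)" if "p \<in> V' \<times> UNIV" "fst q \<in> V'" for p q
    using inj_on_eq_iff[OF inj_apfst that(1), of q] that(2) by (cases q) auto
  have nodes: "tnodes V T = apfst f ` tnodes V' T"
    using V by (force simp: tnodes_def)
  show ?thesis
    unfolding flow_cons_def nodes
    using balance demand[OF _ src] demand[OF _ snk] by (auto simp: tnodes_def)
qed

definition zero_outside :: "'k set \<Rightarrow> ('k \<Rightarrow> 'a set) \<Rightarrow> ('k \<Rightarrow> 'a \<Rightarrow> 'z::zero) set" where
  "zero_outside K A = {x. \<forall>k a. (k \<notin> K \<or> a \<notin> A k) \<longrightarrow> x k a = 0}"

definition pullback :: "'k set \<Rightarrow> ('k \<Rightarrow> 'a set) \<Rightarrow> ('a \<Rightarrow> 'b) \<Rightarrow> ('k \<Rightarrow> 'b \<Rightarrow> 'z::zero) \<Rightarrow> 'k \<Rightarrow> 'a \<Rightarrow> 'z"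
  where "pullback K A h x k a = (if k \<in> K \<and> a \<in> A k then x k (h a) else 0)"

lemma pullback_in_zero_outside: "pullback K A h x \<in> zero_outside K A"
  by (simp add: pullback_def zero_outside_def)

lemma bij_betw_pullback:
  assumes h: "\<And>k. k \<in> K \<Longrightarrow> bij_betw h (A k) (B k)"
  shows "bij_betw (pullback K A h) (zero_outside K B) (zero_outside K A)"
proof (rule bij_betw_imageI)
  show "inj_on (pullback K A h) (zero_outside K B)"
  proof (rule inj_onI, rule ext, rule ext)
    fix x y k b
    assume "x \<in> zero_outside K B" "y \<in> zero_outside K B" and eq: "pullback K A h x = pullback K A h y"
    show "x k b = y k b"
    proof (cases "k \<in> K \<and> b \<in> B k")
      case True
      then obtain a where "a \<in> A k" "b = h a"
        using h by (auto simp: bij_betw_def)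
      with True show ?thesis
        using fun_cong[OF fun_cong[OF eq, of k], of a] by (simp add: pullback_def)
    qed (use \<open>x \<in> _\<close> \<open>y \<in> _\<close> in \<open>auto simp: zero_outside_def\<close>)
  qed
next
  show "pullback K A h ` zero_outside K B = zero_outside K A"
  proof (intro equalityI subsetI)
    fix x'
    assume x': "x' \<in> zero_outside K A"
    define x where "x k b = (if k \<in> K \<and> b \<in> B k then x' k (inv_into (A k) h b) else 0)" for k b
    have "pullback K A h x k a = x' k a" for k a
    proof (cases "k \<in> K \<and> a \<in> A k")
      case True
      then have "h a \<in> B k" "inv_into (A k) h (h a) = a"
        using h bij_betw_apply bij_betw_inv_into_left by metis+
      with True show ?thesis
        by (simp add: pullback_def x_def)
    qed (use x' in \<open>auto simp: pullback_def zero_outside_def\<close>)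
    moreover have "x \<in> zero_outside K B"
      by (simp add: zero_outside_def x_def)
    ultimately show "x' \<in> pullback K A h ` zero_outside K B"
      by (metis image_eqI ext)
  qed (auto simp: pullback_in_zero_outside)
qed

lemma bij_betw_Sigma:
  assumes "\<And>k. k \<in> K \<Longrightarrow> bij_betw h (A k) (B k)"
  shows "bij_betw (map_prod id h) (Sigma K A) (Sigma K B)"
proof (rule bij_betw_imageI)
  show "inj_on (map_prod id h) (Sigma K A)"
    using assms by (auto simp: inj_on_def bij_betw_def)
  show "map_prod id h ` Sigma K A = Sigma K B"
    using assms by (force simp: bij_betw_def)
qed

lemma proj_eq_map_prod: "proj = map_prod fst fst"
  by (auto simp: proj_def fun_eq_iff)

lemma tauG_eq: "tauG I = tau I \<circ> map_prod fst fst"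
  by (auto simp: tauG_def proj_eq_map_prod fun_eq_iff)

locale partitioned_instance =
  fixes I :: "('n, 'k) sndrr" and P :: "'n \<Rightarrow> ('n \<times> 'n) set set"
  assumes valid_instance: "valid_instance I" and valid_partition: "valid_partition I P"
begin

lemma finite_nodes: "finite (nodes I)" and finite_arcs: "finite (arcs I)"
  and arcs_subset: "arcs I \<subseteq> nodes I \<times> nodes I"
  using valid_instance by (simp_all add: valid_instance_def)

lemma parts_disjoint: "v \<in> nodes I \<Longrightarrow> B \<in> P v \<Longrightarrow> B' \<in> P v \<Longrightarrow> B \<inter> B' \<noteq> {} \<Longrightarrow> B = B'"
  and Union_parts: "v \<in> nodes I \<Longrightarrow> \<Union>(P v) = out_arcs (arcs I) v"
  and part_containing: "v \<in> nodes I \<Longrightarrow> k \<in> comms I \<Longrightarrow> out_arcs (Ak I k) v \<noteq> {}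
      \<Longrightarrow> \<exists>B \<in> P v. out_arcs (Ak I k) v \<subseteq> B"
  using valid_partition unfolding valid_partition_def by blast+

lemma mem_GEk: "((v, i), (w, j)) \<in> GEk I P k \<longleftrightarrow> (v, w) \<in> Ak I k \<and> (v, i) \<in> GVk I P k \<and> (w, j) \<in> GVk I P k"
  by (simp add: GEk_def)

context
  fixes k assumes k: "k \<in> comms I"
begin

lemma Nk_subset: "Nk I k \<subseteq> nodes I" and Ak_subset: "Ak I k \<subseteq> Nk I k \<times> Nk I k"
  and orig_in_Nk: "orig I k \<in> Nk I k"
  and dest_in_Nk: "dest I k \<in> Nk I k" and out_arcs_dest: "out_arcs (Ak I k) (dest I k) = {}"
  and out_arcs_nonempty: "v \<in> Nk I k \<Longrightarrow> v \<noteq> dest I k \<Longrightarrow> out_arcs (Ak I k) v \<noteq> {}"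
proof -
  have "\<forall>k \<in> comms I. dem I k > 0
      \<and> Nk I k \<subseteq> nodes I \<and> Ak I k \<subseteq> arcs I \<and> Ak I k \<subseteq> Nk I k \<times> Nk I k
      \<and> orig I k \<in> Nk I k \<and> dest I k \<in> Nk I k
      \<and> out_arcs (Ak I k) (dest I k) = {}
      \<and> (\<forall>v \<in> Nk I k - {dest I k}. out_arcs (Ak I k) v \<noteq> {})"
    using valid_instance unfolding valid_instance_def by (elim conjE) assumption
  with k show "Nk I k \<subseteq> nodes I" "Ak I k \<subseteq> Nk I k \<times> Nk I k"
    "orig I k \<in> Nk I k" "dest I k \<in> Nk I k" "out_arcs (Ak I k) (dest I k) = {}"
    "v \<in> Nk I k \<Longrightarrow> v \<noteq> dest I k \<Longrightarrow> out_arcs (Ak I k) v \<noteq> {}"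
    by blast+
qed

lemma GVk_Some_iff:
  assumes "v \<noteq> dest I k"
  shows "(v, Some B) \<in> GVk I P k \<longleftrightarrow> v \<in> Nk I k \<and> B \<in> P v \<and> out_arcs (Ak I k) v \<subseteq> B"
  using assms k out_arcs_nonempty by (auto simp: GVk_def Kpart_def)

lemma GVk_dest_iff: "(dest I k, i) \<in> GVk I P k \<longleftrightarrow> i = None"
  using out_arcs_dest by (auto simp: GVk_def Kpart_def)

lemma GVk_None_iff: "(v, None) \<in> GVk I P k \<longleftrightarrow> v = dest I k"
  by (auto simp: GVk_def)

lemma fst_GVk: "fst ` GVk I P k = Nk I k"
proof (intro equalityI subsetI)
  fix v
  assume "v \<in> fst ` GVk I P k"
  then show "v \<in> Nk I k"
    using dest_in_Nk unfolding GVk_def by (elim imageE UnE) auto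
next
  fix v
  assume v: "v \<in> Nk I k"
  show "v \<in> fst ` GVk I P k"
  proof (cases "v = dest I k")
    case True
    then have "(v, None) \<in> GVk I P k"
      by (simp add: GVk_None_iff)
    then show ?thesis
      by (metis fst_conv image_eqI)
  next
    case False
    have "v \<in> nodes I"
      using v Nk_subset by blast
    then obtain B where "B \<in> P v" "out_arcs (Ak I k) v \<subseteq> B"
      using part_containing k out_arcs_nonempty[OF v False] by blast
    with v False have "(v, Some B) \<in> GVk I P k"
      by (simp add: GVk_Some_iff)
    then show ?thesis
      by (metis fst_conv image_eqI)
  qed
qed

lemma inj_on_fst_GVk: "inj_on fst (GVk I P k)"
proof (rule inj_onI)
  fix c c'
  assume c: "c \<in> GVk I P k" and c': "c' \<in> GVk I P k" and "fst c = fst c'"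
  then obtain v i i' where cv: "c = (v, i)" "c' = (v, i')"
    by (metis prod.collapse)
  show "c = c'"
  proof (cases "v = dest I k")
    case True
    then show ?thesis
      using c c' cv GVk_dest_iff by simp
  next
    case False
    with c c' cv obtain B B' where BB': "i = Some B" "i' = Some B'" "v \<in> Nk I k"
      "B \<in> P v" "B' \<in> P v" "out_arcs (Ak I k) v \<subseteq> B" "out_arcs (Ak I k) v \<subseteq> B'"
      using GVk_None_iff GVk_Some_iff by (cases i; cases i') auto
    then have "B \<inter> B' \<noteq> {}"
      using out_arcs_nonempty[OF _ False] by blast
    moreover have "v \<in> nodes I"
      using BB' Nk_subset by blast
    ultimately have "B = B'"
      using parts_disjoint BB' by blast
    with BB' cv show ?thesis
      by simp
  qed
qed

lemma GEk_subset: "GEk I P k \<subseteq> GVk I P k \<times> GVk I P k"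
  by (auto simp: GEk_def)

lemma map_prod_fst_GEk: "map_prod fst fst ` GEk I P k = Ak I k"
proof (intro equalityI subsetI)
  fix e
  assume "e \<in> map_prod fst fst ` GEk I P k"
  then show "e \<in> Ak I k"
    unfolding GEk_def by (elim imageE CollectE exE conjE) simp
next
  fix e
  assume e: "e \<in> Ak I k"
  then obtain v w where vw: "e = (v, w)" "v \<in> Nk I k" "w \<in> Nk I k"
    using Ak_subset by blast
  then obtain i j where "(v, i) \<in> GVk I P k" "(w, j) \<in> GVk I P k"
    using fst_GVk by force
  with e vw have "((v, i), (w, j)) \<in> GEk I P k"
    by (simp add: mem_GEk)
  with vw show "e \<in> map_prod fst fst ` GEk I P k"
    by force
qed

lemma origG: "origG I P k \<in> GVk I P k" "fst (origG I P k) = orig I k"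
proof -
  obtain c where c: "c \<in> GVk I P k" "fst c = orig I k"
    using fst_GVk orig_in_Nk by (metis imageE)
  have "c' = c" if "c' \<in> GVk I P k" "fst c' = orig I k" for c'
    using inj_onD[OF inj_on_fst_GVk, of c' c] that c by simp
  with c have "\<exists>!c. c \<in> GVk I P k \<and> fst c = orig I k"
    by blast
  then have "origG I P k \<in> GVk I P k \<and> fst (origG I P k) = orig I k"
    unfolding origG_def by (rule theI')
  then show "origG I P k \<in> GVk I P k" "fst (origG I P k) = orig I k"
    by simp_all
qed

lemma GVk_subset_GV: "GVk I P k \<subseteq> GV I P"
  using Nk_subset dest_in_Nk by (auto simp: GVk_def GV_def)

lemma GEk_subset_GE: "GEk I P k \<subseteq> GE I P"
proof
  fix e
  assume "e \<in> GEk I P k"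
  then obtain v i w j where e: "e = ((v, i), (w, j))" "(v, w) \<in> Ak I k"
    "(v, i) \<in> GVk I P k" "(w, j) \<in> GVk I P k"
    by (auto simp: GEk_def)
  then have "v \<noteq> dest I k"
    using out_arcs_dest by (auto simp: out_arcs_def)
  with e obtain B where "i = Some B" "v \<in> Nk I k" "B \<in> P v" "out_arcs (Ak I k) v \<subseteq> B"
    using GVk_None_iff GVk_Some_iff by (cases i) auto
  with e show "e \<in> GE I P"
    using Nk_subset GVk_subset_GV by (auto simp: GE_def out_arcs_def)
qed

lemma bij_betw_GkT: "bij_betw (map_tarc fst) (GkT I P k) (DkT I k)"
  unfolding GkT_def DkT_def tauG_eq
  by (rule bij_betw_map_tarc[OF inj_on_fst_GVk fst_GVk GEk_subset map_prod_fst_GEk refl])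

lemma bij_betw_tnodes: "bij_betw (apfst fst) (tnodes (GVk I P k) T) (tnodes (Nk I k) T)"
  unfolding tnodes_def apfst_def
  by (intro bij_betw_map_prod bij_betw_id) (simp add: bij_betw_def inj_on_fst_GVk fst_GVk)

lemma flow_cons_GkT_iff:
  assumes "\<And>e. e \<in> GkT I P k \<Longrightarrow> x' e = x (map_tarc fst e)"
  shows "flow_cons (GVk I P k) (GEk I P k) (tauG I) (horizon I)
           (origG I P k, rel I k) ((dest I k, None), dl I k) x'
     \<longleftrightarrow> flow_cons (Nk I k) (Ak I k) (tau I) (horizon I) (orig I k, rel I k) (dest I k, dl I k) x"
  using flow_cons_map_tarc[OF inj_on_fst_GVk fst_GVk GEk_subset map_prod_fst_GEk tauG_eq[of I],
      where src = "(origG I P k, rel I k)" and snk = "((dest I k, None), dl I k)" and T = "horizon I"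
      and x' = x' and x = x]
    assms origG GVk_None_iff by (simp add: GkT_def)

lemma GkT_subset_ET: "e \<in> GkT I P k \<Longrightarrow> map_tarc fst e \<in> AT I \<Longrightarrow> e \<in> ET I P"
  using GEk_subset_GE
  by (cases e rule: ttail.cases) (auto simp: GkT_def ET_def AT_def tauG_eq)

end

lemma mem_GE: "((v, i), (w, j)) \<in> GE I P \<longleftrightarrow>
    v \<in> nodes I \<and> (\<exists>B. i = Some B \<and> B \<in> P v \<and> (v, w) \<in> B) \<and> (w, j) \<in> GV I P"
  by (auto simp: GE_def)

lemma parts_subset_arcs: "v \<in> nodes I \<Longrightarrow> B \<in> P v \<Longrightarrow> B \<subseteq> arcs I"
  using Union_parts by (auto simp: out_arcs_def)

lemma finite_GV: "finite (GV I P)"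
proof -
  have "GV I P \<subseteq> nodes I \<times> insert None (Some ` Pow (arcs I))"
    using parts_subset_arcs by (auto simp: GV_def)
  then show ?thesis
    using finite_nodes finite_arcs by (simp add: finite_subset)
qed

lemma finite_ET: "finite (ET I P)"
proof -
  have "GE I P \<subseteq> GV I P \<times> GV I P"
    by (auto simp: GE_def GV_def)
  then show ?thesis
    unfolding ET_def using finite_GV by (intro finite_mv_arcs) (simp add: finite_subset)
qed

lemma finite_AT: "finite (AT I)"
  unfolding AT_def using finite_arcs by (rule finite_mv_arcs)

lemma map_tarc_fst_ET: "map_tarc fst ` ET I P \<subseteq> AT I"
proof
  fix a
  assume "a \<in> map_tarc fst ` ET I P"
  then obtain v i w j t where "a = Inl ((v, w), t)" "((v, i), (w, j)) \<in> GE I P"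
    "t + tau I (v, w) \<le> horizon I"
    by (auto simp: ET_def mv_arcs_def tauG_eq)
  then show "a \<in> AT I"
    using parts_subset_arcs by (auto simp: AT_def mem_GE)
qed

lemma ETof_eq_fibre:
  assumes "a \<in> AT I"
  shows "ETof I P a = {e \<in> ET I P. map_tarc fst e = a}"
proof -
  obtain v w t where a: "a = Inl ((v, w), t)" "(v, w) \<in> arcs I" "t + tau I (v, w) \<le> horizon I"
    using assms by (auto simp: AT_def mv_arcs_def)
  then have v: "v \<in> nodes I"
    using arcs_subset by blast
  show ?thesis
  proof (intro set_eqI iffI)
    fix e
    assume "e \<in> ETof I P a"
    then obtain B j where "e = Inl (((v, Some B), (w, j)), t)" "B \<in> P v" "(v, w) \<in> B" "(w, j) \<in> GV I P"
      using a by (auto simp: ETof_def)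
    with a v show "e \<in> {e \<in> ET I P. map_tarc fst e = a}"
      by (simp add: ET_def mem_GE tauG_eq)
  next
    fix e
    assume "e \<in> {e \<in> ET I P. map_tarc fst e = a}"
    then obtain v' i w' j t' where "e = Inl (((v', i), (w', j)), t')" "((v', i), (w', j)) \<in> GE I P"
      "map_tarc fst e = a"
      by (auto simp: ET_def mv_arcs_def)
    with a show "e \<in> ETof I P a"
      by (auto simp: ETof_def mem_GE)
  qed
qed

abbreviation lift :: "('k \<Rightarrow> 'n tarc \<Rightarrow> int) \<Rightarrow> 'k \<Rightarrow> 'n copy tarc \<Rightarrow> int" where
  "lift \<equiv> pullback (comms I) (GkT I P) (map_tarc fst)"

lemma sum_ETof_lift:
  assumes x: "x \<in> zero_outside (comms I) (DkT I)" and a: "a \<in> AT I" and k: "k \<in> comms I"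
  shows "(\<Sum>e \<in> ETof I P a. lift x k e) = x k a"
proof -
  have "ETof I P a \<inter> GkT I P k = {e \<in> GkT I P k. map_tarc fst e = a}"
    using ETof_eq_fibre[OF a] GkT_subset_ET[OF k] a by auto
  then have "(\<Sum>e \<in> ETof I P a. lift x k e) = (\<Sum>e \<in> {e \<in> GkT I P k. map_tarc fst e = a}. x k (map_tarc fst e))"
    using finite_ET ETof_eq_fibre[OF a] k
    by (simp add: sum.inter_restrict[symmetric] pullback_def)
  also have "\<dots> = (\<Sum>b \<in> {b \<in> DkT I k. b = a}. x k b)"
    by (rule sum.reindex_bij_betw[OF bij_betw_Collect[OF bij_betw_GkT[OF k]]]) simp
  also have "\<dots> = x k a"
  proof (cases "a \<in> DkT I k")
    case True
    then have "{b \<in> DkT I k. b = a} = {a}"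
      by auto
    then show ?thesis
      by simp
  next
    case False
    then have "{b \<in> DkT I k. b = a} = {}"
      by auto
    with False x show ?thesis
      by (simp add: zero_outside_def)
  qed
  finally show ?thesis .
qed

lemma lift_feasible_iff:
  assumes x: "x \<in> zero_outside (comms I) (DkT I)"
  shows "(lift x, y) \<in> feasG I P \<longleftrightarrow> (x, y) \<in> feasD I"
proof -
  have "flow_cons (GVk I P k) (GEk I P k) (tauG I) (horizon I)
          (origG I P k, rel I k) ((dest I k, None), dl I k) (lift x k)
      \<longleftrightarrow> flow_cons (Nk I k) (Ak I k) (tau I) (horizon I) (orig I k, rel I k) (dest I k, dl I k) (x k)"
    if "k \<in> comms I" for k
    using that by (intro flow_cons_GkT_iff) (simp_all add: pullback_def)
  moreover have "(\<Sum>k \<in> comms I. \<Sum>e \<in> ETof I P a. dem I k * of_int (lift x k e))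
      = (\<Sum>k \<in> comms I. dem I k * of_int (x k a))" if "a \<in> AT I" for a
    using sum_ETof_lift[OF x that]
    by (intro sum.cong) (simp_all flip: sum_distrib_left of_int_sum)
  moreover have "(\<forall>e \<in> GkT I P k. lift x k e \<in> {0, 1}) \<longleftrightarrow> (\<forall>a \<in> DkT I k. x k a \<in> {0, 1})"
    if "k \<in> comms I" for k
  proof -
    have "DkT I k = map_tarc fst ` GkT I P k"
      using bij_betw_GkT[OF that] by (simp add: bij_betw_def)
    with that show ?thesis
      by (simp add: pullback_def)
  qed
  ultimately show ?thesis
    using x pullback_in_zero_outside[of "comms I" "GkT I P" "map_tarc fst" x]
    by (simp add: feasD_def feasG_def zero_outside_def)
qed

lemma objG_lift:
  assumes x: "x \<in> zero_outside (comms I) (DkT I)"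
  shows "objG I P (lift x, y) = objD I (x, y)"
proof -
  have "(\<Sum>e \<in> ET I P. ucost I k (proj (flat_arc e)) * dem I k * of_int (lift x k e))
      = (\<Sum>a \<in> AT I. ucost I k (flat_arc a) * dem I k * of_int (x k a))" if k: "k \<in> comms I" for k
  proof -
    have "(\<Sum>e \<in> ET I P. ucost I k (proj (flat_arc e)) * dem I k * of_int (lift x k e))
        = (\<Sum>a \<in> AT I. \<Sum>e \<in> {e \<in> ET I P. map_tarc fst e = a}.
             ucost I k (proj (flat_arc e)) * dem I k * of_int (lift x k e))"
      by (rule sum.group[OF finite_ET finite_AT map_tarc_fst_ET, symmetric])
    also have "\<dots> = (\<Sum>a \<in> AT I. \<Sum>e \<in> ETof I P a. ucost I k (flat_arc a) * dem I k * of_int (lift x k e))"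
      by (intro sum.cong) (auto simp: ETof_eq_fibre proj_eq_map_prod flat_arc_map_tarc[symmetric])
    also have "\<dots> = (\<Sum>a \<in> AT I. ucost I k (flat_arc a) * dem I k * of_int (x k a))"
      using sum_ETof_lift[OF x _ k] by (simp flip: sum_distrib_left of_int_sum)
    finally show ?thesis .
  qed
  then show ?thesis
    by (simp add: objG_def objD_def sum.swap[of _ "AT I"])
qed

lemma bij_betw_feasible: "bij_betw (map_prod lift id) (feasD I) (feasG I P)"
proof -
  have "bij_betw (map_prod lift id)
      (zero_outside (comms I) (DkT I) \<times> UNIV) (zero_outside (comms I) (GkT I P) \<times> UNIV)"
    by (intro bij_betw_map_prod bij_betw_id bij_betw_pullback bij_betw_GkT)
  then have "bij_betw (map_prod lift id)
      {s \<in> zero_outside (comms I) (DkT I) \<times> UNIV. s \<in> feasD I}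
      {s \<in> zero_outside (comms I) (GkT I P) \<times> UNIV. s \<in> feasG I P}"
    by (rule bij_betw_Collect) (auto simp: lift_feasible_iff)
  moreover have "feasD I \<subseteq> zero_outside (comms I) (DkT I) \<times> UNIV"
    "feasG I P \<subseteq> zero_outside (comms I) (GkT I P) \<times> UNIV"
    by (auto simp: feasD_def feasG_def zero_outside_def)
  ultimately show ?thesis
    by (simp add: Collect_conj_eq Int_absorb1 Int_absorb2)
qed

lemma objG_feasible: "s \<in> feasD I \<Longrightarrow> objG I P (map_prod lift id s) = objD I s"
  by (cases s) (auto simp: feasD_def zero_outside_def objG_lift)

lemma nvarsD_eq_nvarsG: "nvarsD I = nvarsG I P"
proof -
  have "bij_betw (map_prod id (map_tarc fst)) (Sigma (comms I) (GkT I P)) (Sigma (comms I) (DkT I))"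
    by (rule bij_betw_Sigma) (rule bij_betw_GkT)
  then show ?thesis
    by (simp add: nvarsD_def nvarsG_def bij_betw_same_card)
qed

lemma nconsD_eq_nconsG: "nconsD I = nconsG I P"
proof -
  have "bij_betw (map_prod id (apfst fst))
      (SIGMA k:comms I. tnodes (GVk I P k) (horizon I)) (SIGMA k:comms I. tnodes (Nk I k) (horizon I))"
    by (rule bij_betw_Sigma) (rule bij_betw_tnodes)
  then show ?thesis
    by (simp add: nconsD_def nconsG_def bij_betw_same_card)
qed

end

theorem theorem2:
  fixes I :: "('n, 'k) sndrr" and P :: "'n \<Rightarrow> ('n \<times> 'n) set set"
  assumes "valid_instance I" and "valid_partition I P"
  shows "nvarsD I = nvarsG I P \<and> nconsD I = nconsG I P
       \<and> (\<exists>\<phi>. bij_betw \<phi> (feasD I) (feasG I P) \<and> (\<forall>s \<in> feasD I. objG I P (\<phi> s) = objD I s))"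
proof -
  interpret partitioned_instance I P
    using assms by unfold_locales
  show ?thesis
    using nvarsD_eq_nvarsG nconsD_eq_nconsG bij_betw_feasible objG_feasible by blast
qed

end
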